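(* Let $X$ be a normal Galilean manifold with principal $H$-bundle $\pi:P\to X$ and Cartan connection $\begin{pmatrix}0&0&0\\ \tau&0&0\\ \omega&\phi&\Pi\end{pmatrix}$. Let $(t,x,y)$ be normal coordinates on an open set of $X$, with local section $h$ of $P$ satisfying $h^*\tau=dt$, $h^*\omega=dx-y\,dt$ and $h^*\phi\equiv dy \pmod{dt,dx}$, and write $$h^*\phi = dy + \Gamma(t,x,y)\,dt + N(t,x,y)\,(dx-y\,dt)$$ for an $\mathbb{R}^n$-valued function $\Gamma=(\Gamma^j)$ and a matrix-valued function $N$. Then the geodesics of $X$ (in this coordinate domain) are the solutions of the system of second order ordinary differential equations $$\frac{d^2x^j}{dt^2}+\Gamma^j\!\left(t,x,\frac{dx}{dt}\right)=0,\qquad j=1,\dots,n,$$ that is, up to reparametrization, they are exactly the curves $t\mapsto (t,x(t),\tfrac{dx}{dt}(t))$ with $x(t)$ solving this system.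
   Context: $Gal_n$ is the matrix group of matrices $\begin{pmatrix}1&0&0\\ t&1&0\\ x&y&A\end{pmatrix}$ ($t\in\mathbb{R}$, $x,y\in\mathbb{R}^n$, $A\in GL_n(\mathbb{R})$), with Lie algebra $\mathfrak{gal}_n$ of matrices $\begin{pmatrix}0&0&0\\ a&0&0\\ b&c&B\end{pmatrix}$, and $H$ is the subgroup of matrices $\mathrm{diag}(1,1,A)$. The left Maurer–Cartan form of $Gal_n$ is $\omega_G=\begin{pmatrix}0&0&0\\ dt&0&0\\ A^{-1}(dx-y\,dt)&A^{-1}dy&A^{-1}dA\end{pmatrix}$. The homogeneous space $Gal_n/H$ is identified with the first jet bundle $J^1(\mathbb{R},\mathbb{R}^n)\cong\mathbb{R}\times\mathbb{R}^n\times\mathbb{R}^n$ with coordinates $(t,x,y)$ via the coset of the matrix above. A curve $\tilde\sigma$ in $J^1(\mathbb{R},\mathbb{R}^n)$ is a straight line if $\tilde\sigma^*(dx-y\,dt)=0$, $\tilde\sigma^*(dy)=0$ and $\tilde\sigma^*(dt)\neq0$. A Galilean manifold is a manifold $X$ with a principal $H$-bundle $\pi:P\to X$ and a Cartan connection $\theta=\begin{pmatrix}0&0&0\\ \tau&0&0\\ \omega&\phi&\Pi\end{pmatrix}$, i.e. a $\mathfrak{gal}_n$-valued one-form on $P$ which is a pointwise isomorphism $T_pP\to\mathfrak{gal}_n$, satisfies $R_h^*\theta=\mathrm{Ad}(h^{-1})\theta$ for $h\in H$, and $\theta(X^\dagger)=X$ for fundamental vector fields $X^\dagger$, $X\in\mathfrak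 h$. It is normal if $d\tau=0$ and $d\omega+\Pi\wedge\omega+\phi\wedge\tau=0$. Development: for a curve $\rho:[0,1]\to P$, its development is the unique curve $\tilde\rho:[0,1]\to Gal_n$ with $\rho^*\theta=\tilde\rho^*\omega_G$ and $\tilde\rho(0)=e$. For a curve $\sigma$ in $X$, take any lift $\rho$ to $P$; the projection of $\tilde\rho$ to $Gal_n/H=J^1(\mathbb{R},\mathbb{R}^n)$ is independent of the lift and is called the development $\tilde\sigma$ of $\sigma$. A geodesic of $X$ is a (germ of a) curve in $X$ whose development is contained in a straight line. *)

theory Defs
  imports "HOL-Analysis.Analysis"
begin

text \<open>Local model.  A point of the coordinate domain (and of the jet space
J^1(R,R^n)) is a triple (t, x, y) with t real and x, y in R^n.
Tangent vectors have the same shape (dt, dx, dy).\<close>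

type_synonym 'n pt = "real \<times> (real^'n) \<times> (real^'n)"

definition tc :: "'n pt \<Rightarrow> real" where "tc p = fst p"
definition xc :: "'n pt \<Rightarrow> real^'n" where "xc p = fst (snd p)"
definition yc :: "'n pt \<Rightarrow> real^'n" where "yc p = snd (snd p)"

text \<open>Exterior derivative of a (vector valued) one-form alpha, given as
alpha p v (linear in v), evaluated at p on the pair (v, w).\<close>
definition ext_d :: "('n::finite pt \<Rightarrow> 'n pt \<Rightarrow> 'w::real_normed_vector) \<Rightarrow> 'n pt \<Rightarrow> 'n pt \<Rightarrow> 'n pt \<Rightarrow> 'w" where
  "ext_d \<alpha> p v w =
     frechet_derivative (\<lambda>q. \<alpha> q w) (at p) v - frechet_derivative (\<lambda>q. \<alpha> q v) (at p) w"

text \<open>Normality of the Cartan connection, pulled back by the section h: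
d tau = 0 and d omega + Pi /\ omega + phi /\ tau = 0.\<close>
definition normal_pullback ::
  "'n::finite pt set \<Rightarrow> ('n pt \<Rightarrow> 'n pt \<Rightarrow> real) \<Rightarrow> ('n pt \<Rightarrow> 'n pt \<Rightarrow> real^'n)
   \<Rightarrow> ('n pt \<Rightarrow> 'n pt \<Rightarrow> real^'n) \<Rightarrow> ('n pt \<Rightarrow> 'n pt \<Rightarrow> real^'n^'n) \<Rightarrow> bool" where
  "normal_pullback U \<tau> \<omega> \<phi> Pm \<longleftrightarrow>
     (\<forall>p\<in>U. \<forall>v w.
        ext_d \<tau> p v w = 0 \<and>
        ext_d \<omega> p v w
          + ((Pm p v) *v (\<omega> p w) - (Pm p w) *v (\<omega> p v))
          + (\<tau> p w *\<^sub>R \<phi> p v - \<tau> p v *\<^sub>R \<phi> p w) = 0)"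

text \<open>An element of Gal_n is represented by its entries (T, X, Y, A) (A invertible);
the condition is rho^* theta = D^* omega_G with the given Maurer-Cartan form
omega_G = (dT, A^-1 (dX - Y dT), A^-1 dY, A^-1 dA), and D(0) = e.\<close>
definition is_development ::
  "('n::finite pt \<Rightarrow> 'n pt \<Rightarrow> real) \<Rightarrow> ('n pt \<Rightarrow> 'n pt \<Rightarrow> real^'n)
   \<Rightarrow> ('n pt \<Rightarrow> 'n pt \<Rightarrow> real^'n) \<Rightarrow> ('n pt \<Rightarrow> 'n pt \<Rightarrow> real^'n^'n)
   \<Rightarrow> (real \<Rightarrow> 'n pt) \<Rightarrow> (real \<Rightarrow> real \<times> (real^'n) \<times> (real^'n) \<times> (real^'n^'n)) \<Rightarrow> bool" where
  "is_development \<tau> \<omega> \<phi> Pm \<sigma> D \<longleftrightarrow>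
     D 0 = (0, 0, 0, mat 1) \<and>
     (\<forall>s\<in>{0..1}.
        let (T, X, Y, A) = D s;
            v = vector_derivative \<sigma> (at s within {0..1}) in
        invertible A \<and>
        (\<exists>T' X' Y' A'.
           (D has_vector_derivative (T', X', Y', A')) (at s within {0..1}) \<and>
           T' = \<tau> (\<sigma> s) v \<and>
           matrix_inv A *v (X' - T' *\<^sub>R Y) = \<omega> (\<sigma> s) v \<and>
           matrix_inv A *v Y' = \<phi> (\<sigma> s) v \<and>
           matrix_inv A ** A' = Pm (\<sigma> s) v))"

text \<open>Projection Gal_n -> Gal_n/H = J^1(R,R^n): (T,X,Y,A) |-> (T,X,Y).\<close>
definition proj_J1 :: "real \<times> (real^'n) \<times> (real^'n) \<times> (real^'n^'n::finite) \<Rightarrow> 'n pt" where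
  "proj_J1 g = (fst g, fst (snd g), fst (snd (snd g)))"

definition straight_line :: "(real \<Rightarrow> 'n::finite pt) \<Rightarrow> real set \<Rightarrow> bool" where
  "straight_line l I \<longleftrightarrow>
     is_interval I \<and> open I \<and> I \<noteq> {} \<and>
     (\<forall>u\<in>I. \<exists>l'. (l has_vector_derivative l') (at u) \<and>
        xc l' - tc l' *\<^sub>R yc (l u) = 0 \<and> yc l' = 0 \<and> tc l' \<noteq> 0)"

definition is_geodesic ::
  "('n::finite pt \<Rightarrow> 'n pt \<Rightarrow> real) \<Rightarrow> ('n pt \<Rightarrow> 'n pt \<Rightarrow> real^'n)
   \<Rightarrow> ('n pt \<Rightarrow> 'n pt \<Rightarrow> real^'n) \<Rightarrow> ('n pt \<Rightarrow> 'n pt \<Rightarrow> real^'n^'n)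
   \<Rightarrow> (real \<Rightarrow> 'n pt) \<Rightarrow> bool" where
  "is_geodesic \<tau> \<omega> \<phi> Pm \<sigma> \<longleftrightarrow>
     (\<exists>D. is_development \<tau> \<omega> \<phi> Pm \<sigma> D \<and>
        (\<exists>l I. straight_line l I \<and> (proj_J1 \<circ> D) ` {0..1} \<subseteq> l ` I))"

end

(*
  A curve is a geodesic iff it is tangent to the distribution omega = phi = 0.
  Its development starts at the origin, and a straight line of J^1 through the origin
  has x = y = 0 throughout, so the development has X = Y = 0 and hence pulls back
  omega and phi to zero.  Conversely, if omega and phi vanish on the velocity of the
  curve, normality (the structure equation for d omega) forces Pi = tau N along it,
  and the development is (int tau, 0, 0, A) with A' = A Pi, a linear equation whose
  solution exists and stays invertible; it lies on the line t |-> (t, 0, 0).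
  In normal coordinates omega = phi = 0 reads x' = t' y and y' = - t' Gamma; as the
  curve is regular this forces t' /= 0, so t is a parameter and these are the
  equations dx/dt = y, dy/dt = - Gamma(t, x, y).
*)

theory Submission
  imports Defs
begin

section \<open>Linear differential equations on the unit interval\<close>

lemma has_integral_exp_linear:
  fixes L s :: real
  assumes "L \<noteq> 0" "0 \<le> s"
  shows "((\<lambda>u. exp (L * u)) has_integral (exp (L * s) - 1) / L) {0..s}"
proof -
  have "((\<lambda>u. exp (L * u)) has_integral exp (L * s) / L - exp (L * 0) / L) {0..s}"
    by (rule fundamental_theorem_of_calculus)
       (use assms in \<open>auto intro!: derivative_eq_intros
          simp: has_real_derivative_iff_has_vector_derivative[symmetric]\<close>)
  then show ?thesis by (simp add: diff_divide_distrib)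
qed

lemma norm_exp_weighted_integral_le:
  fixes h :: "real \<Rightarrow> 'a::banach"
  assumes "L > 0" "0 \<le> s" "continuous_on {0..s} h" "\<And>u. u \<in> {0..s} \<Longrightarrow> norm (h u) \<le> C"
  shows "norm (exp (- L * s) *\<^sub>R integral {0..s} (\<lambda>u. exp (L * u) *\<^sub>R h u)) \<le> C / L"
proof -
  have "norm (h 0) \<le> C" using assms(2,4) by simp
  then have "C \<ge> 0" using norm_ge_zero order_trans by blast
  have "norm (integral {0..s} (\<lambda>u. exp (L * u) *\<^sub>R h u)) \<le> integral {0..s} (\<lambda>u. exp (L * u) * C)"
    using assms(4)
    by (intro integral_norm_bound_integral integrable_continuous_real continuous_intros assms(3))
       (simp_all add: mult_left_mono)
  also have "\<dots> = C * ((exp (L * s) - 1) / L)"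
    using has_integral_exp_linear[of L s] assms(1,2)
    by (simp add: integral_unique mult.commute)
  finally have bound: "norm (integral {0..s} (\<lambda>u. exp (L * u) *\<^sub>R h u)) \<le> C * ((exp (L * s) - 1) / L)" .
  have "norm (exp (- L * s) *\<^sub>R integral {0..s} (\<lambda>u. exp (L * u) *\<^sub>R h u))
      \<le> exp (- L * s) * (C * ((exp (L * s) - 1) / L))"
    using mult_left_mono[OF bound, of "exp (- L * s)"] by simp
  also have "\<dots> = C * ((1 - exp (- L * s)) / L)"
    by (simp add: exp_minus field_simps)
  also have "\<dots> \<le> C / L"
    using \<open>C \<ge> 0\<close> \<open>L > 0\<close> mult_left_mono[of "(1 - exp (- L * s)) / L" "1 / L" C]
    by (simp add: divide_right_mono)
  finally show ?thesis by simp
qed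

lemma contraction_on_unit_interval_has_fixed_point:
  fixes \<Phi> :: "(real \<Rightarrow>\<^sub>C 'a::complete_space) \<Rightarrow> real \<Rightarrow> 'a"
  assumes cont: "\<And>f. continuous_on {0..1} (\<Phi> f)" and "0 \<le> c" "c < 1"
    and contraction: "\<And>f g s. s \<in> {0..1} \<Longrightarrow> dist (\<Phi> f s) (\<Phi> g s) \<le> c * dist f g"
  obtains f where "\<And>s. s \<in> {0..1} \<Longrightarrow> \<Phi> f s = f s"
proof -
  have "\<exists>g :: real \<Rightarrow>\<^sub>C 'a. \<forall>s. g s = \<Phi> f (clamp 0 1 s)" for f
    using continuous_on_cbox_bcontfunE[OF cont[of f, folded cbox_interval]] by metis
  then obtain G where G: "\<And>f s. apply_bcontfun (G f) s = \<Phi> f (clamp 0 1 s)"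
    by metis
  have clamp: "clamp 0 1 s \<in> {0..1::real}" for s
    using clamp_in_interval[of 0 1 s] by (simp add: cbox_interval)
  have "dist (G f) (G g) \<le> c * dist f g" for f g
  proof (rule dist_bound)
    show "dist (G f s) (G g s) \<le> c * dist f g" for s
      using contraction[OF clamp[of s]] by (simp add: G)
  qed
  then obtain f where "G f = f" using banach_fix_type[OF \<open>0 \<le> c\<close> \<open>c < 1\<close>] by blast
  then have "\<Phi> f s = f s" if "s \<in> {0..1}" for s
    using G[of f s] that by (simp add: cbox_interval)
  then show ?thesis by (rule that)
qed

lemma linear_ode_solution_exists:
  fixes prod :: "'b::banach \<Rightarrow> 'a::real_normed_vector \<Rightarrow> 'b" and M :: "real \<Rightarrow> 'a"
  assumes "bounded_bilinear prod" and M_cont: "continuous_on {0..1} M"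
  obtains A where "A 0 = A0"
    "\<And>s. s \<in> {0..1} \<Longrightarrow> (A has_vector_derivative prod (A s) (M s)) (at s within {0..1})"
proof -
  interpret bounded_bilinear prod by fact
  obtain KM where KM: "KM > 0" "\<And>s. s \<in> {0..1} \<Longrightarrow> norm (M s) \<le> KM"
    using compact_imp_bounded[OF compact_continuous_image[OF M_cont compact_Icc]]
    by (auto simp: bounded_pos)
  obtain KB where KB: "KB > 0" "\<And>a b. norm (prod a b) \<le> norm a * norm b * KB"
    using pos_bounded by blast
  define L where "L = 2 * KB * KM + 1"
  define c where "c = KB * KM / L"
  have "0 < KB * KM" using KB KM by simp
  then have "L > 0" "0 \<le> c" "c < 1" by (auto simp: c_def L_def)
  \<comment> \<open>Bielecki's trick: in the weighted sup norm of \<open>exp (- L s) A s\<close> the Picard operator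
    becomes a contraction on all of \<open>[0,1]\<close>.\<close>
  define \<Phi> where "\<Phi> f s = exp (- L * s) *\<^sub>R
      (A0 + integral {0..s} (\<lambda>u. exp (L * u) *\<^sub>R prod (apply_bcontfun f u) (M u)))"
    for f :: "real \<Rightarrow>\<^sub>C 'b" and s
  have integrand_cont: "continuous_on {0..s} (\<lambda>u. exp (L * u) *\<^sub>R prod (f u) (M u))"
    if "s \<le> 1" "continuous_on {0..s} f" for f :: "real \<Rightarrow> 'b" and s
    using that continuous_on_subset[OF M_cont, of "{0..s}"]
    by (intro continuous_intros continuous_on) auto
  have \<Phi>_cont: "continuous_on {0..1} (\<Phi> f)" for f
    unfolding \<Phi>_def
    by (intro continuous_intros indefinite_integral_continuous_1 integrable_continuous_real
        integrand_cont) auto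
  have \<Phi>_contraction: "dist (\<Phi> f s) (\<Phi> g s) \<le> c * dist f g" if "s \<in> {0..1}" for f g s
  proof -
    let ?F = "\<lambda>f u. exp (L * u) *\<^sub>R prod (apply_bcontfun f u) (M u)"
    have int: "?F f integrable_on {0..s}" for f
      using that by (intro integrable_continuous_real integrand_cont continuous_on_apply_bcontfun) auto
    have "\<Phi> f s - \<Phi> g s = exp (- L * s) *\<^sub>R integral {0..s} (\<lambda>u. ?F f u - ?F g u)"
      unfolding \<Phi>_def integral_diff[OF int int] by (simp add: algebra_simps)
    also have "(\<lambda>u. ?F f u - ?F g u) = (\<lambda>u. exp (L * u) *\<^sub>R prod (f u - g u) (M u))"
      by (simp add: fun_eq_iff diff_left scaleR_diff_right)
    finally have "dist (\<Phi> f s) (\<Phi> g s)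
        = norm (exp (- L * s) *\<^sub>R integral {0..s} (\<lambda>u. exp (L * u) *\<^sub>R prod (f u - g u) (M u)))"
      by (simp add: dist_norm)
    also have "\<dots> \<le> dist f g * KM * KB / L"
    proof (rule norm_exp_weighted_integral_le[OF \<open>L > 0\<close>])
      fix u assume "u \<in> {0..s}"
      then have "norm (f u - g u) * norm (M u) \<le> dist f g * KM"
        using that KM(2)[of u] dist_bounded[of f u g]
        by (intro mult_mono) (auto simp: dist_norm)
      then show "norm (prod (f u - g u) (M u)) \<le> dist f g * KM * KB"
        using KB by (meson mult_right_mono less_imp_le order_trans)
    next
      have "continuous_on {0..s} M" using that by (auto intro: continuous_on_subset[OF M_cont])
      then show "continuous_on {0..s} (\<lambda>u. prod (f u - g u) (M u))"
        by (intro continuous_on continuous_intros continuous_on_apply_bcontfun)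
    qed (use that in auto)
    also have "\<dots> = c * dist f g"
      using \<open>L > 0\<close> by (simp add: c_def)
    finally show ?thesis .
  qed
  obtain f0 where f0: "\<And>s. s \<in> {0..1} \<Longrightarrow> \<Phi> f0 s = f0 s"
    using contraction_on_unit_interval_has_fixed_point[OF \<Phi>_cont \<open>0 \<le> c\<close> \<open>c < 1\<close> \<Phi>_contraction]
    by blast
  define A where "A s = A0 + integral {0..s} (\<lambda>u. exp (L * u) *\<^sub>R prod (apply_bcontfun f0 u) (M u))" for s
  have A_f0: "A s = exp (L * s) *\<^sub>R apply_bcontfun f0 s" if "s \<in> {0..1}" for s
  proof -
    have "f0 s = exp (- L * s) *\<^sub>R A s" using f0[OF that] by (simp add: \<Phi>_def A_def)
    then show ?thesis by (simp add: exp_minus)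
  qed
  show ?thesis
  proof
    show "A 0 = A0" by (simp add: A_def)
    fix s :: real assume s: "s \<in> {0..1}"
    have "(A has_vector_derivative 0 + exp (L * s) *\<^sub>R prod (apply_bcontfun f0 s) (M s)) (at s within {0..1})"
      unfolding A_def
      by (intro has_vector_derivative_add has_vector_derivative_const integral_has_vector_derivative
          integrand_cont order_refl continuous_on_apply_bcontfun s)
    then show "(A has_vector_derivative prod (A s) (M s)) (at s within {0..1})"
      by (simp add: A_f0[OF s] scaleR_left)
  qed
qed

lemma bounded_bilinear_matrix_matrix_mult:
  "bounded_bilinear ((**) :: real^'n::finite^'m \<Rightarrow> real^'k::finite^'n \<Rightarrow> real^'k^'m)"
  unfolding bilinear_conv_bounded_bilinear[symmetric] bilinear_def
  by (auto intro!: linearI simp: matrix_matrix_mult_def vec_eq_iff sum.distrib sum_distrib_left algebra_simps)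

lemma matrix_inv_left: "invertible (A :: real^'n::finite^'n) \<Longrightarrow> matrix_inv A ** A = mat 1"
  unfolding invertible_def matrix_inv_def by (rule someI2_ex) auto

lemma linear_matrix_ode_invertible_solution_exists:
  fixes M :: "real \<Rightarrow> real^'n::finite^'n"
  assumes M_cont: "continuous_on {0..1} M"
  obtains A where "A 0 = mat 1" "\<And>s. s \<in> {0..1} \<Longrightarrow> invertible (A s)"
    "\<And>s. s \<in> {0..1} \<Longrightarrow> (A has_vector_derivative A s ** M s) (at s within {0..1})"
proof -
  note mult = bounded_bilinear_matrix_matrix_mult
  obtain A where A: "A 0 = mat 1"
    "\<And>s. s \<in> {0..1} \<Longrightarrow> (A has_vector_derivative A s ** M s) (at s within {0..1})"
    using linear_ode_solution_exists[OF mult M_cont] by blast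
  \<comment> \<open>The solution \<open>B\<close> of the adjoint equation \<open>B' = - M B\<close> is a right inverse of \<open>A\<close>,
    since \<open>(A B)' = 0\<close>.\<close>
  have "continuous_on {0..1} (\<lambda>s. - M s)" using M_cont by (intro continuous_intros)
  then obtain B where B: "B 0 = mat 1"
    "\<And>s. s \<in> {0..1} \<Longrightarrow> (B has_vector_derivative (- M s) ** B s) (at s within {0..1})"
    using linear_ode_solution_exists[OF bounded_bilinear.flip[OF mult]] by blast
  have "((\<lambda>s. A s ** B s) has_derivative (\<lambda>h. 0)) (at s within {0..1})" if s: "s \<in> {0..1}" for s
  proof -
    have "((\<lambda>s. A s ** B s) has_vector_derivative A s ** ((- M s) ** B s) + (A s ** M s) ** B s)
        (at s within {0..1})"
      by (rule bounded_bilinear.has_vector_derivative[OF mult A(2)[OF s] B(2)[OF s]])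
    moreover have "A s ** ((- M s) ** B s) + (A s ** M s) ** B s = 0"
      by (simp add: bounded_bilinear.minus_left[OF mult] bounded_bilinear.minus_right[OF mult]
          matrix_mul_assoc)
    ultimately show ?thesis by (simp add: has_vector_derivative_def)
  qed
  then have "A s ** B s = A 0 ** B 0" if "s \<in> {0..1}" for s
    by (rule has_derivative_zero_unique[OF convex_real_interval(5)]) (use that in auto)
  then have "A s ** B s = mat 1" if "s \<in> {0..1}" for s
    using that by (simp add: A(1) B(1))
  then have "invertible (A s)" if "s \<in> {0..1}" for s
    using that matrix_left_right_inverse unfolding invertible_def by blast
  then show ?thesis by (rule that[OF A(1) _ A(2)])
qed

section \<open>Geodesics are the null curves of omega and phi\<close>

lemma C1_differentiable_on_interval_vector_derivative:
  fixes f :: "real \<Rightarrow> 'a::real_normed_vector"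
  assumes "f C1_differentiable_on {a..b}" "a < b"
  shows "continuous_on {a..b} (\<lambda>s. vector_derivative f (at s within {a..b}))"
    and "\<And>s. s \<in> {a..b} \<Longrightarrow> (f has_vector_derivative vector_derivative f (at s within {a..b})) (at s)"
proof -
  obtain f' where f': "\<And>s. s \<in> {a..b} \<Longrightarrow> (f has_vector_derivative f' s) (at s)"
    and cont: "continuous_on {a..b} f'"
    using assms(1) unfolding C1_differentiable_on_def by blast
  have vd: "vector_derivative f (at s within {a..b}) = f' s" if "s \<in> {a..b}" for s
    using vector_derivative_at_within_ivl[OF f'[OF that]] that \<open>a < b\<close> by simp
  show "continuous_on {a..b} (\<lambda>s. vector_derivative f (at s within {a..b}))"
    by (rule continuous_on_eq[OF cont]) (simp add: vd)
  show "(f has_vector_derivative vector_derivative f (at s within {a..b})) (at s)" if "s \<in> {a..b}" for s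
    using f'[OF that] vd[OF that] by simp
qed

lemma has_vector_derivative_fst:
  "(f has_vector_derivative v) F \<Longrightarrow> ((\<lambda>s. fst (f s)) has_vector_derivative fst v) F"
  by (rule bounded_linear.has_vector_derivative[OF bounded_linear_fst])

lemma has_vector_derivative_snd:
  "(f has_vector_derivative v) F \<Longrightarrow> ((\<lambda>s. snd (f s)) has_vector_derivative snd v) F"
  by (rule bounded_linear.has_vector_derivative[OF bounded_linear_snd])

lemma has_vector_derivative_eq_0_if_vanishing:
  fixes f :: "real \<Rightarrow> 'a::real_normed_vector"
  assumes "a < b" "s \<in> {a..b}" "\<And>u. u \<in> {a..b} \<Longrightarrow> f u = 0"
    and "(f has_vector_derivative f') (at s within {a..b})"
  shows "f' = 0"
proof -
  have "(f has_vector_derivative 0) (at s within {a..b})"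
    using assms(2,3) by (intro has_vector_derivative_transform[OF _ _ has_vector_derivative_const])
  then show ?thesis
    using vector_derivative_unique_within_closed_interval[of a b s f f' 0] assms by (simp add: cbox_interval)
qed

lemma straight_line_through_origin:
  assumes l: "straight_line l I" and "u0 \<in> I" "xc (l u0) = 0" "yc (l u0) = 0" and "u \<in> I"
  shows "xc (l u) = 0 \<and> yc (l u) = 0"
proof -
  have "convex I" using l is_interval_convex unfolding straight_line_def by blast
  obtain l' where l': "\<And>u. u \<in> I \<Longrightarrow> (l has_vector_derivative l' u) (at u within I)"
    "\<And>u. u \<in> I \<Longrightarrow> xc (l' u) = tc (l' u) *\<^sub>R yc (l u) \<and> yc (l' u) = 0"
    using l unfolding straight_line_def by (metis has_vector_derivative_at_within eq_iff_diff_eq_0)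
  have "yc (l u) = yc (l u0)" if "u \<in> I" for u
  proof (rule has_derivative_zero_unique[OF \<open>convex I\<close> _ that \<open>u0 \<in> I\<close>])
    fix v assume "v \<in> I"
    then show "((\<lambda>s. yc (l s)) has_derivative (\<lambda>h. 0)) (at v within I)"
      using has_vector_derivative_snd[OF has_vector_derivative_snd[OF l'(1)]] l'(2)
      by (simp add: yc_def has_vector_derivative_def)
  qed
  then have y0: "yc (l u) = 0" if "u \<in> I" for u using that assms(4) by simp
  have "xc (l u) = xc (l u0)"
  proof (rule has_derivative_zero_unique[OF \<open>convex I\<close> _ \<open>u \<in> I\<close> \<open>u0 \<in> I\<close>])
    fix v assume "v \<in> I"
    then show "((\<lambda>s. xc (l s)) has_derivative (\<lambda>h. 0)) (at v within I)"
      using has_vector_derivative_fst[OF has_vector_derivative_snd[OF l'(1)]] l'(2) y0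
      by (simp add: xc_def has_vector_derivative_def)
  qed
  then show ?thesis using assms(3) y0 \<open>u \<in> I\<close> by simp
qed

definition null_curve ::
  "('n::finite pt \<Rightarrow> 'n pt \<Rightarrow> real^'n) \<Rightarrow> ('n pt \<Rightarrow> 'n pt \<Rightarrow> real^'n) \<Rightarrow> (real \<Rightarrow> 'n pt) \<Rightarrow> bool"
  where "null_curve \<omega> \<phi> \<sigma> \<longleftrightarrow>
    (\<forall>s\<in>{0..1}. \<omega> (\<sigma> s) (vector_derivative \<sigma> (at s within {0..1})) = 0 \<and>
                 \<phi> (\<sigma> s) (vector_derivative \<sigma> (at s within {0..1})) = 0)"

lemma geodesic_imp_null_curve:
  assumes "is_geodesic \<tau> \<omega> \<phi> Pm \<sigma>"
  shows "null_curve \<omega> \<phi> \<sigma>"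
  unfolding null_curve_def
proof
  fix s :: real assume s: "s \<in> {0..1}"
  obtain D l I where dev: "is_development \<tau> \<omega> \<phi> Pm \<sigma> D" and l: "straight_line l I"
    and img: "(proj_J1 \<circ> D) ` {0..1} \<subseteq> l ` I"
    using assms unfolding is_geodesic_def by blast
  have on_line: "\<exists>u\<in>I. proj_J1 (D s') = l u" if "s' \<in> {0..1}" for s'
    using img that by (auto simp: image_subset_iff image_iff)
  obtain u0 where "u0 \<in> I" "proj_J1 (D 0) = l u0" using on_line[of 0] by auto
  moreover have "D 0 = (0, 0, 0, mat 1)" using dev unfolding is_development_def by simp
  ultimately have "l u0 = (0, 0, 0)" by (simp add: proj_J1_def)
  then have origin: "xc (l u0) = 0" "yc (l u0) = 0" by (simp_all add: xc_def yc_def)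
  have XY_0: "fst (snd (D s')) = 0 \<and> fst (snd (snd (D s'))) = 0" if s': "s' \<in> {0..1}" for s'
  proof -
    obtain u where "u \<in> I" "proj_J1 (D s') = l u" using on_line[OF s'] by blast
    then have "xc (proj_J1 (D s')) = 0 \<and> yc (proj_J1 (D s')) = 0"
      using straight_line_through_origin[OF l \<open>u0 \<in> I\<close> origin] by simp
    then show ?thesis by (simp add: proj_J1_def xc_def yc_def)
  qed
  obtain T X Y A where Ds: "D s = (T, X, Y, A)" by (cases "D s")
  have "let (T, X, Y, A) = D s; v = vector_derivative \<sigma> (at s within {0..1}) in
      invertible A \<and>
      (\<exists>T' X' Y' A'.
         (D has_vector_derivative (T', X', Y', A')) (at s within {0..1}) \<and>
         T' = \<tau> (\<sigma> s) v \<and>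
         matrix_inv A *v (X' - T' *\<^sub>R Y) = \<omega> (\<sigma> s) v \<and>
         matrix_inv A *v Y' = \<phi> (\<sigma> s) v \<and>
         matrix_inv A ** A' = Pm (\<sigma> s) v)"
    using dev s unfolding is_development_def by blast
  then obtain T' X' Y' A' where D': "(D has_vector_derivative (T', X', Y', A')) (at s within {0..1})"
    and "matrix_inv A *v (X' - T' *\<^sub>R Y) = \<omega> (\<sigma> s) (vector_derivative \<sigma> (at s within {0..1}))"
    and "matrix_inv A *v Y' = \<phi> (\<sigma> s) (vector_derivative \<sigma> (at s within {0..1}))"
    unfolding Ds Let_def prod.case by blast
  moreover have "X' = 0"
  proof (rule has_vector_derivative_eq_0_if_vanishing[of 0 1 s "\<lambda>s. fst (snd (D s))"])
    show "((\<lambda>s. fst (snd (D s))) has_vector_derivative X') (at s within {0..1})"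
      using has_vector_derivative_fst[OF has_vector_derivative_snd[OF D']] by simp
  qed (use XY_0 s in auto)
  moreover have "Y' = 0"
  proof (rule has_vector_derivative_eq_0_if_vanishing[of 0 1 s "\<lambda>s. fst (snd (snd (D s)))"])
    show "((\<lambda>s. fst (snd (snd (D s)))) has_vector_derivative Y') (at s within {0..1})"
      using has_vector_derivative_fst[OF has_vector_derivative_snd[OF has_vector_derivative_snd[OF D']]]
      by simp
  qed (use XY_0 s in auto)
  moreover have "Y = 0" using XY_0[OF s] by (simp add: Ds)
  ultimately show "\<omega> (\<sigma> s) (vector_derivative \<sigma> (at s within {0..1})) = 0 \<and>
      \<phi> (\<sigma> s) (vector_derivative \<sigma> (at s within {0..1})) = 0"
    by simp
qed

lemma null_curve_imp_geodesic:
  fixes \<sigma> :: "real \<Rightarrow> 'n::finite pt" and T :: "real \<Rightarrow> real"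
  assumes null: "null_curve \<omega> \<phi> \<sigma>"
    and T: "T 0 = 0" "\<And>s. s \<in> {0..1} \<Longrightarrow>
      (T has_real_derivative \<tau> (\<sigma> s) (vector_derivative \<sigma> (at s within {0..1}))) (at s within {0..1})"
    and Pm_cont: "continuous_on {0..1} (\<lambda>s. Pm (\<sigma> s) (vector_derivative \<sigma> (at s within {0..1})))"
  shows "is_geodesic \<tau> \<omega> \<phi> Pm \<sigma>"
proof -
  define M where "M s = Pm (\<sigma> s) (vector_derivative \<sigma> (at s within {0..1}))" for s
  obtain A where A: "A 0 = mat 1" "\<And>s. s \<in> {0..1} \<Longrightarrow> invertible (A s)"
    "\<And>s. s \<in> {0..1} \<Longrightarrow> (A has_vector_derivative A s ** M s) (at s within {0..1})"
    using linear_matrix_ode_invertible_solution_exists[OF Pm_cont[folded M_def]] by blast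
  define D where "D s = (T s, 0 :: real^'n, 0 :: real^'n, A s)" for s
  have "is_development \<tau> \<omega> \<phi> Pm \<sigma> D"
    unfolding is_development_def
  proof (intro conjI ballI)
    show "D 0 = (0, 0, 0, mat 1)" by (simp add: D_def T(1) A(1))
    fix s :: real assume s: "s \<in> {0..1}"
    let ?v = "vector_derivative \<sigma> (at s within {0..1})"
    have D': "(D has_vector_derivative (\<tau> (\<sigma> s) ?v, 0, 0, A s ** M s)) (at s within {0..1})"
      unfolding D_def using T(2)[OF s] A(3)[OF s]
      by (intro has_vector_derivative_Pair has_vector_derivative_const)
         (simp_all add: has_real_derivative_iff_has_vector_derivative)
    have "matrix_inv (A s) ** (A s ** M s) = Pm (\<sigma> s) ?v"
      by (simp add: matrix_mul_assoc matrix_inv_left[OF A(2)[OF s]] M_def)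
    moreover have "\<omega> (\<sigma> s) ?v = 0" "\<phi> (\<sigma> s) ?v = 0"
      using null s unfolding null_curve_def by auto
    ultimately show "let (T, X, Y, A) = D s; v = ?v in
        invertible A \<and>
        (\<exists>T' X' Y' A'.
           (D has_vector_derivative (T', X', Y', A')) (at s within {0..1}) \<and>
           T' = \<tau> (\<sigma> s) v \<and>
           matrix_inv A *v (X' - T' *\<^sub>R Y) = \<omega> (\<sigma> s) v \<and>
           matrix_inv A *v Y' = \<phi> (\<sigma> s) v \<and>
           matrix_inv A ** A' = Pm (\<sigma> s) v)"
      using A(2)[OF s] unfolding Let_def D_def prod.case
      by (intro conjI exI[of _ "\<tau> (\<sigma> s) ?v"] exI[of _ "A s ** M s"] exI[of _ 0] D'[unfolded D_def])
         simp_all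
  qed
  moreover have "straight_line (\<lambda>u. (u, 0, 0) :: 'n pt) UNIV"
    unfolding straight_line_def
    by (auto intro!: exI[of _ "(1, 0, 0)"] has_vector_derivative_Pair has_vector_derivative_id
        has_vector_derivative_const simp: tc_def xc_def yc_def)
  moreover have "(proj_J1 \<circ> D) ` {0..1} \<subseteq> (\<lambda>u. (u, 0, 0)) ` UNIV"
    by (auto simp: D_def proj_J1_def)
  ultimately show ?thesis unfolding is_geodesic_def by blast
qed

lemma normal_connection_on_null_vector:
  assumes normal: "normal_pullback U \<tau> \<omega> \<phi> Pm" and "p \<in> U"
    and tau_h: "\<And>p v. \<tau> p v = tc v"
    and omega_h: "\<And>p v. \<omega> p v = xc v - tc v *\<^sub>R yc p"
    and phi_h: "\<And>p v. \<phi> p v = yc v + tc v *\<^sub>R \<Gamma> p + N p *v (xc v - tc v *\<^sub>R yc p)"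
    and null: "\<omega> p v = 0" "\<phi> p v = 0"
  shows "Pm p v = tc v *\<^sub>R N p"
proof -
  \<comment> \<open>Evaluate \<open>d\<omega> + \<Pi> \<and> \<omega> + \<phi> \<and> \<tau> = 0\<close> on \<open>v\<close> and \<open>w = (0, e, 0)\<close>: as \<open>\<omega> v = \<phi> v = 0\<close> and
    \<open>d\<omega> (v, w) = \<tau> v \<cdot> y w - \<tau> w \<cdot> y v = 0\<close>, only \<open>\<Pi> v e - \<tau> v \<cdot> N e = 0\<close> survives.\<close>
  have d\<omega>: "((\<lambda>q. \<omega> q w) has_derivative (\<lambda>h. - (tc w *\<^sub>R yc h))) (at p)" for w
    unfolding omega_h yc_def by (auto intro!: derivative_eq_intros)
  have "Pm p v *v e = (tc v *\<^sub>R N p) *v e" for e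
  proof -
    define w :: "'a pt" where "w = (0, e, 0)"
    have "ext_d \<omega> p v w + (Pm p v *v \<omega> p w - Pm p w *v \<omega> p v)
        + (\<tau> p w *\<^sub>R \<phi> p v - \<tau> p v *\<^sub>R \<phi> p w) = 0"
      using normal \<open>p \<in> U\<close> unfolding normal_pullback_def by blast
    moreover have "ext_d \<omega> p v w = 0"
      unfolding ext_d_def frechet_derivative_at[OF d\<omega>, symmetric] by (simp add: w_def tc_def yc_def)
    ultimately show ?thesis
      using null by (simp add: w_def tau_h omega_h phi_h tc_def xc_def yc_def scaleR_matrix_vector_assoc)
  qed
  then show ?thesis by (simp add: matrix_eq)
qed

lemma normal_null_curve_imp_geodesic:
  fixes \<sigma> :: "real \<Rightarrow> 'n::finite pt"
  assumes normal: "normal_pullback U \<tau> \<omega> \<phi> Pm"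
    and tau_h: "\<And>p v. \<tau> p v = tc v"
    and omega_h: "\<And>p v. \<omega> p v = xc v - tc v *\<^sub>R yc p"
    and phi_h: "\<And>p v. \<phi> p v = yc v + tc v *\<^sub>R \<Gamma> p + N p *v (xc v - tc v *\<^sub>R yc p)"
    and N_cont: "continuous_on U N"
    and sigma_U: "\<sigma> ` {0..1} \<subseteq> U"
    and sigma_C1: "\<sigma> C1_differentiable_on {0..1}"
    and null: "null_curve \<omega> \<phi> \<sigma>"
  shows "is_geodesic \<tau> \<omega> \<phi> Pm \<sigma>"
proof -
  let ?\<sigma>' = "\<lambda>s. vector_derivative \<sigma> (at s within {0..1})"
  note \<sigma>' = C1_differentiable_on_interval_vector_derivative[OF sigma_C1 zero_less_one]
  have Pm_eq: "Pm (\<sigma> s) (?\<sigma>' s) = tc (?\<sigma>' s) *\<^sub>R N (\<sigma> s)" if "s \<in> {0..1}" for s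
    using null that sigma_U unfolding null_curve_def
    by (intro normal_connection_on_null_vector[OF normal _ tau_h omega_h phi_h]) auto
  have "continuous_on {0..1} (\<lambda>s. tc (?\<sigma>' s) *\<^sub>R N (\<sigma> s))"
    using \<sigma>'(1) continuous_on_compose2[OF N_cont C1_differentiable_imp_continuous_on[OF sigma_C1] sigma_U]
    unfolding tc_def by (intro continuous_intros)
  then have "continuous_on {0..1} (\<lambda>s. Pm (\<sigma> s) (?\<sigma>' s))"
    by (rule continuous_on_eq) (simp add: Pm_eq)
  moreover have "((\<lambda>s. tc (\<sigma> s) - tc (\<sigma> 0)) has_real_derivative \<tau> (\<sigma> s) (?\<sigma>' s))
      (at s within {0..1})" if "s \<in> {0..1}" for s
    using has_vector_derivative_diff[OF has_vector_derivative_fst[OF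
        has_vector_derivative_at_within[OF \<sigma>'(2)[OF that], of "{0..1}"]] has_vector_derivative_const]
    by (simp add: tau_h tc_def has_real_derivative_iff_has_vector_derivative)
  ultimately show ?thesis
    using null_curve_imp_geodesic[OF null, of "\<lambda>s. tc (\<sigma> s) - tc (\<sigma> 0)"] by simp
qed

section \<open>Null curves in normal coordinates\<close>

lemma DERIV_nonzero_imp_inj_on:
  fixes f :: "real \<Rightarrow> real"
  assumes "convex S" and f': "\<And>x. x \<in> S \<Longrightarrow> (f has_real_derivative f' x) (at x)"
    and nonzero: "\<And>x. x \<in> S \<Longrightarrow> f' x \<noteq> 0"
  shows "inj_on f S"
proof -
  have "f x \<noteq> f y" if "x \<in> S" "y \<in> S" "x < y" for x y
  proof
    assume "f x = f y"
    have "closed_segment x y \<subseteq> S" using \<open>convex S\<close> that convex_contains_segment by blast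
    then have sub: "{x..y} \<subseteq> S" using \<open>x < y\<close> by (simp add: closed_segment_eq_real_ivl)
    then have "continuous_on {x..y} f"
      using f' by (meson DERIV_isCont continuous_at_imp_continuous_on subsetD)
    moreover have "f differentiable (at z)" if "x < z" "z < y" for z
      using f' sub that real_differentiable_def by (meson atLeastAtMost_iff less_imp_le subsetD)
    ultimately obtain z where z: "x < z" "z < y" "DERIV f z :> 0"
      using Rolle[OF \<open>x < y\<close> \<open>f x = f y\<close>] by blast
    then have "z \<in> S" using sub by auto
    then show False using DERIV_unique[OF f' z(3)] nonzero by blast
  qed
  then show ?thesis
    by (intro inj_onI) (metis linorder_cases)
qed

lemma has_vector_derivative_compose_inv_into:
  fixes r :: "real \<Rightarrow> real" and f :: "real \<Rightarrow> 'a::real_normed_vector"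
  assumes "compact S" "continuous_on S r" "inj_on r S" "s \<in> S"
    and r': "(r has_real_derivative r') (at s within S)" "r' \<noteq> 0"
    and f': "(f has_vector_derivative f') (at s within S)"
  shows "((f \<circ> inv_into S r) has_vector_derivative f' /\<^sub>R r') (at (r s) within r ` S)"
proof -
  have "continuous_on (r ` S) (inv_into S r)"
    using assms(1-3) by (intro continuous_on_inv) auto
  then have "(inv_into S r has_derivative (*) (inverse r')) (at (r s) within r ` S)"
    using assms(3,4) r'
    by (intro has_derivative_inverse_within[OF r'(1)[unfolded has_field_derivative_def]])
       (auto simp: continuous_on_eq_continuous_within fun_eq_iff)
  then have "(inv_into S r has_vector_derivative inverse r') (at (r s) within r ` S)"
    by (simp add: has_real_derivative_iff_has_vector_derivative[symmetric] has_field_derivative_def)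
  moreover have "(f has_vector_derivative f') (at (inv_into S r (r s)) within inv_into S r ` r ` S)"
    using assms(3,4) f' by simp
  ultimately show ?thesis by (rule vector_diff_chain_within)
qed

definition reparametrized_solution :: "('n::finite pt \<Rightarrow> real^'n) \<Rightarrow> (real \<Rightarrow> 'n pt) \<Rightarrow> bool" where
  "reparametrized_solution \<Gamma> \<sigma> \<longleftrightarrow>
    (\<exists>(r :: real \<Rightarrow> real) (x :: real \<Rightarrow> real^'n) xd xdd.
       (\<forall>s\<in>{0..1}. \<exists>r'. (r has_real_derivative r') (at s within {0..1}) \<and> r' \<noteq> 0) \<and>
       (\<forall>t\<in>r ` {0..1}.
          (x has_vector_derivative xd t) (at t within r ` {0..1}) \<and>
          (xd has_vector_derivative xdd t) (at t within r ` {0..1}) \<and>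
          xdd t + \<Gamma> (t, x t, xd t) = 0) \<and>
       (\<forall>s\<in>{0..1}. \<sigma> s = (r s, x (r s), xd (r s))))"

lemma null_vector_iff:
  assumes omega_h: "\<And>p v. \<omega> p v = xc v - tc v *\<^sub>R yc p"
    and phi_h: "\<And>p v. \<phi> p v = yc v + tc v *\<^sub>R \<Gamma> p + N p *v (xc v - tc v *\<^sub>R yc p)"
  shows "\<omega> p v = 0 \<and> \<phi> p v = 0 \<longleftrightarrow> xc v = tc v *\<^sub>R yc p \<and> yc v = - (tc v *\<^sub>R \<Gamma> p)"
  by (auto simp: omega_h phi_h eq_neg_iff_add_eq_0)

lemma reparametrized_solution_imp_null_curve:
  assumes omega_h: "\<And>p v. \<omega> p v = xc v - tc v *\<^sub>R yc p"
    and phi_h: "\<And>p v. \<phi> p v = yc v + tc v *\<^sub>R \<Gamma> p + N p *v (xc v - tc v *\<^sub>R yc p)"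
    and "reparametrized_solution \<Gamma> \<sigma>"
  shows "null_curve \<omega> \<phi> \<sigma>"
proof -
  obtain r :: "real \<Rightarrow> real" and x xd xdd :: "real \<Rightarrow> real^_"
    where r: "\<forall>s\<in>{0..1}. \<exists>r'. (r has_real_derivative r') (at s within {0..1}) \<and> r' \<noteq> 0"
      and ode: "\<forall>t\<in>r ` {0..1}. (x has_vector_derivative xd t) (at t within r ` {0..1}) \<and>
          (xd has_vector_derivative xdd t) (at t within r ` {0..1}) \<and> xdd t + \<Gamma> (t, x t, xd t) = 0"
      and \<sigma>_eq: "\<forall>s\<in>{0..1}. \<sigma> s = (r s, x (r s), xd (r s))"
    using assms(3) unfolding reparametrized_solution_def by blast
  show ?thesis
    unfolding null_curve_def
  proof
    fix s :: real assume s: "s \<in> {0..1}"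
    obtain r' where "(r has_real_derivative r') (at s within {0..1})" using r s by blast
    then have r': "(r has_vector_derivative r') (at s within {0..1})"
      by (simp add: has_real_derivative_iff_has_vector_derivative)
    have "r s \<in> r ` {0..1}" using s by blast
    note ode_s = ode[rule_format, OF this]
    have "((\<lambda>s. x (r s)) has_vector_derivative r' *\<^sub>R xd (r s)) (at s within {0..1})"
      using vector_diff_chain_within[OF r', of x] ode_s by (simp add: o_def)
    moreover have "((\<lambda>s. xd (r s)) has_vector_derivative r' *\<^sub>R xdd (r s)) (at s within {0..1})"
      using vector_diff_chain_within[OF r', of xd] ode_s by (simp add: o_def)
    ultimately have "((\<lambda>s. (r s, x (r s), xd (r s))) has_vector_derivative
        (r', r' *\<^sub>R xd (r s), r' *\<^sub>R xdd (r s))) (at s within {0..1})"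
      by (intro has_vector_derivative_Pair r')
    then have "(\<sigma> has_vector_derivative (r', r' *\<^sub>R xd (r s), r' *\<^sub>R xdd (r s))) (at s within {0..1})"
      by (rule has_vector_derivative_transform[OF s, rotated]) (simp add: \<sigma>_eq)
    then have "vector_derivative \<sigma> (at s within {0..1}) = (r', r' *\<^sub>R xd (r s), r' *\<^sub>R xdd (r s))"
      using s by (intro vector_derivative_within_closed_interval) auto
    moreover have "xdd (r s) = - \<Gamma> (\<sigma> s)"
      using ode_s \<sigma>_eq[rule_format, OF s] by (simp add: eq_neg_iff_add_eq_0)
    ultimately show "\<omega> (\<sigma> s) (vector_derivative \<sigma> (at s within {0..1})) = 0 \<and>
        \<phi> (\<sigma> s) (vector_derivative \<sigma> (at s within {0..1})) = 0"
      unfolding null_vector_iff[OF omega_h phi_h] using \<sigma>_eq[rule_format, OF s] by (simp add: tc_def xc_def yc_def)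
  qed
qed

lemma null_curve_imp_reparametrized_solution:
  assumes omega_h: "\<And>p v. \<omega> p v = xc v - tc v *\<^sub>R yc p"
    and phi_h: "\<And>p v. \<phi> p v = yc v + tc v *\<^sub>R \<Gamma> p + N p *v (xc v - tc v *\<^sub>R yc p)"
    and C1: "\<sigma> C1_differentiable_on {0..1}"
    and regular: "\<And>s. s \<in> {0..1} \<Longrightarrow> vector_derivative \<sigma> (at s within {0..1}) \<noteq> 0"
    and null: "null_curve \<omega> \<phi> \<sigma>"
  shows "reparametrized_solution \<Gamma> \<sigma>"
proof -
  define \<sigma>' where "\<sigma>' s = vector_derivative \<sigma> (at s within {0..1})" for s
  have \<sigma>': "(\<sigma> has_vector_derivative \<sigma>' s) (at s)" if "s \<in> {0..1}" for s
    using C1_differentiable_on_interval_vector_derivative(2)[OF C1 _ that] by (simp add: \<sigma>'_def)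
  define r where "r = (\<lambda>s. tc (\<sigma> s))"
  define rd where "rd s = tc (\<sigma>' s)" for s
  have coords: "xc (\<sigma>' s) = rd s *\<^sub>R yc (\<sigma> s) \<and> yc (\<sigma>' s) = - (rd s *\<^sub>R \<Gamma> (\<sigma> s))"
    if "s \<in> {0..1}" for s
  proof -
    have "\<omega> (\<sigma> s) (\<sigma>' s) = 0 \<and> \<phi> (\<sigma> s) (\<sigma>' s) = 0"
      using null that unfolding null_curve_def \<sigma>'_def by blast
    then show ?thesis unfolding null_vector_iff[OF omega_h phi_h] rd_def .
  qed
  have r': "(r has_real_derivative rd s) (at s)" if "s \<in> {0..1}" for s
    using has_vector_derivative_fst[OF \<sigma>'[OF that]]
    by (simp add: r_def rd_def tc_def has_real_derivative_iff_has_vector_derivative)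
  have rd_nonzero: "rd s \<noteq> 0" if "s \<in> {0..1}" for s
  proof
    assume "rd s = 0"
    then have "\<sigma>' s = 0" using coords[OF that] by (simp add: rd_def tc_def xc_def yc_def prod_eq_iff)
    then show False using regular that by (simp add: \<sigma>'_def)
  qed
  have inj: "inj_on r {0..1}"
    by (rule DERIV_nonzero_imp_inj_on[OF convex_real_interval(5) r' rd_nonzero])
  have cont: "continuous_on {0..1} r"
    using r' by (meson DERIV_isCont continuous_at_imp_continuous_on)
  define x where "x = (\<lambda>s. xc (\<sigma> s)) \<circ> inv_into {0..1} r"
  define xd where "xd = (\<lambda>s. yc (\<sigma> s)) \<circ> inv_into {0..1} r"
  have \<sigma>_eq: "\<sigma> s = (r s, x (r s), xd (r s))" if "s \<in> {0..1}" for s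
    using inv_into_f_f[OF inj that] by (simp add: x_def xd_def r_def tc_def xc_def yc_def)
  have ode: "(x has_vector_derivative xd t) (at t within r ` {0..1}) \<and>
      (xd has_vector_derivative - \<Gamma> (t, x t, xd t)) (at t within r ` {0..1})"
    if t: "t \<in> r ` {0..1}" for t
  proof -
    obtain s where s: "s \<in> {0..1}" "t = r s" using t by blast
    note reparam = has_vector_derivative_compose_inv_into[OF compact_Icc cont inj s(1)
        has_field_derivative_at_within[OF r'[OF s(1)]] rd_nonzero[OF s(1)]]
    note \<sigma>'_s = has_vector_derivative_at_within[OF \<sigma>'[OF s(1)], of "{0..1}"]
    have "(x has_vector_derivative xc (\<sigma>' s) /\<^sub>R rd s) (at t within r ` {0..1})"
      unfolding x_def s(2) xc_def
      by (rule reparam[OF has_vector_derivative_fst[OF has_vector_derivative_snd[OF \<sigma>'_s]]])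
    moreover have "(xd has_vector_derivative yc (\<sigma>' s) /\<^sub>R rd s) (at t within r ` {0..1})"
      unfolding xd_def s(2) yc_def
      by (rule reparam[OF has_vector_derivative_snd[OF has_vector_derivative_snd[OF \<sigma>'_s]]])
    moreover have "xc (\<sigma>' s) /\<^sub>R rd s = xd t" "yc (\<sigma>' s) /\<^sub>R rd s = - \<Gamma> (t, x t, xd t)"
      using coords[OF s(1)] rd_nonzero[OF s(1)] \<sigma>_eq[OF s(1)] by (simp_all add: s(2) yc_def)
    ultimately show ?thesis by simp
  qed
  have "\<exists>r'. (r has_real_derivative r') (at s within {0..1}) \<and> r' \<noteq> 0" if "s \<in> {0..1}" for s
    using has_field_derivative_at_within[OF r'[OF that]] rd_nonzero[OF that] by blast
  then show ?thesis
    unfolding reparametrized_solution_def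
    using ode \<sigma>_eq
    by (intro exI[of _ r] exI[of _ x] exI[of _ xd] exI[of _ "\<lambda>t. - \<Gamma> (t, x t, xd t)"] conjI ballI) simp_all
qed

theorem mainTheorem2:
  fixes U :: "'n::finite pt set"
    and \<tau> :: "'n pt \<Rightarrow> 'n pt \<Rightarrow> real"
    and \<omega> \<phi> :: "'n pt \<Rightarrow> 'n pt \<Rightarrow> real^'n"
    and Pm :: "'n pt \<Rightarrow> 'n pt \<Rightarrow> real^'n^'n"
    and \<Gamma> :: "'n pt \<Rightarrow> real^'n"
    and N :: "'n pt \<Rightarrow> real^'n^'n"
    and \<sigma> :: "real \<Rightarrow> 'n pt"
  assumes U_open: "open U"
    and tau_h: "\<And>p v. \<tau> p v = tc v"
    and omega_h: "\<And>p v. \<omega> p v = xc v - tc v *\<^sub>R yc p"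
    and phi_h: "\<And>p v. \<phi> p v = yc v + tc v *\<^sub>R \<Gamma> p + N p *v (xc v - tc v *\<^sub>R yc p)"
    and Pi_lin: "\<And>p. p \<in> U \<Longrightarrow> linear (Pm p)"
    and Pi_diff: "\<And>v. (\<lambda>p. Pm p v) differentiable_on U"
    and Gamma_cont: "continuous_on U \<Gamma>"
    and N_cont: "continuous_on U N"
    and normal: "normal_pullback U \<tau> \<omega> \<phi> Pm"
    and sigma_U: "\<sigma> ` {0..1} \<subseteq> U"
    and sigma_C1: "\<sigma> C1_differentiable_on {0..1}"
    and sigma_imm: "\<And>s. s \<in> {0..1} \<Longrightarrow> vector_derivative \<sigma> (at s within {0..1}) \<noteq> 0"
  shows "is_geodesic \<tau> \<omega> \<phi> Pm \<sigma> \<longleftrightarrow>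
    (\<exists>(r :: real \<Rightarrow> real) (x :: real \<Rightarrow> real^'n) xd xdd.
       (\<forall>s\<in>{0..1}. \<exists>r'. (r has_real_derivative r') (at s within {0..1}) \<and> r' \<noteq> 0) \<and>
       (\<forall>t\<in>r ` {0..1}.
          (x has_vector_derivative xd t) (at t within r ` {0..1}) \<and>
          (xd has_vector_derivative xdd t) (at t within r ` {0..1}) \<and>
          xdd t + \<Gamma> (t, x t, xd t) = 0) \<and>
       (\<forall>s\<in>{0..1}. \<sigma> s = (r s, x (r s), xd (r s))))"
proof -
  have "is_geodesic \<tau> \<omega> \<phi> Pm \<sigma> \<longleftrightarrow> null_curve \<omega> \<phi> \<sigma>"
    using geodesic_imp_null_curve
      normal_null_curve_imp_geodesic[OF normal tau_h omega_h phi_h N_cont sigma_U sigma_C1] by blast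
  also have "\<dots> \<longleftrightarrow> reparametrized_solution \<Gamma> \<sigma>"
    using null_curve_imp_reparametrized_solution[OF omega_h phi_h sigma_C1 sigma_imm]
      reparametrized_solution_imp_null_curve[OF omega_h phi_h] by blast
  finally show ?thesis unfolding reparametrized_solution_def .
qed

end
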